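(* Let $m,T$ be positive integers with $T\ge 2$, let $n=2^T-1$, let $\mathbf{G}\in\mathbb{F}_2^{n\times m}$ have $n$ distinct nonzero rows $\mathbf{g}_1,\dots,\mathbf{g}_n$ spanning a subspace of dimension $T$ (so the rows are exactly the nonzero vectors of that subspace), and let $\mathbf{A}\in\mathbb{F}_2^{T\times m}$ have rows forming a basis of the row space of $\mathbf{G}$. For $1\le k\le T$ let $T_k^{\min}$ denote the smallest $T_k$ for which there is $\mathbf{P}\in\mathbb{F}_2^{T_k\times T}$ such that every $\mathbf{g}_i$ is a sum over $\mathbb{F}_2$ of at most $k$ rows of $\mathbf{P}\mathbf{A}$. Then: (i) for every $k<T$, $T_k^{\min}\ge T+1$; in particular, if $\lceil T/2\rceil\le k<T$ then $T_k^{\min}=T+1$; (ii) if $1\le k<\lceil T/2\rceil$ then $$T_k^{\min}\ \ge\ \frac{k}{e}\left(\frac{2^T-1}{k}\right)^{1/k}=2^{\Omega\left(\frac{T}{k}+\frac{k-1}{k}\log k\right)}.$$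
   Context: Logarithms are base 2 and $e$ is Euler's number. *)

theory Defs
  imports "HOL-Analysis.Analysis" "HOL-Library.Z2"
begin

text \<open>A matrix P in F_2^{Tk x T} is given by its rows P 0, ..., P (Tk-1) :: bit^'t;
  row j of P A is (P j) v* A.\<close>

definition Tmin :: "nat \<Rightarrow> bit^'m^'n \<Rightarrow> bit^'m^'t \<Rightarrow> nat" where
  "Tmin k G A = (LEAST Tk. \<exists>P :: nat \<Rightarrow> bit^'t.
      \<forall>i. \<exists>S. S \<subseteq> {..<Tk} \<and> card S \<le> k \<and> G $ i = (\<Sum>j\<in>S. P j v* A))"

end

theory Submission imports Defs begin

text \<open>If every one of the \<open>2^T - 1\<close> distinct nonzero rows of \<open>G\<close> is the sum of at most \<open>k\<close>
  of the \<open>N\<close> rows of \<open>P A\<close>, then distinct rows use distinct nonempty index sets, so \<open>2^T - 1\<close>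
  is at most the number of nonempty subsets of \<open>{..<N}\<close> with at most \<open>k\<close> elements. For
  \<open>N \<le> T\<close> and \<open>k < T\<close> this number is at most \<open>2^T - 2\<close>, which gives \<open>T + 1 \<le> N\<close>; in general
  it is at most \<open>(e N / k)^k\<close>, which gives the bound of part (ii).

  For \<open>T \<le> 2 k\<close>, the \<open>T\<close> unit vectors and the all-ones vector suffice: a vector of \<open>F_2^T\<close> is the
  sum of the unit vectors on its support, and also the all-ones vector plus the unit vectors off its
  support, and one of these two representations uses at most \<open>k\<close> terms.\<close>

lemma axis_vector_matrix_mult: "axis i 1 v* A = A $ i"
  by (simp add: vec_eq_iff vector_matrix_mult_def axis_def if_distrib[where f = "\<lambda>x. x * _"] cong: if_cong)

lemma vector_matrix_mult_sum: "(\<Sum>j\<in>S. f j) v* A = (\<Sum>j\<in>S. f j v* A)"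
  by (induction S rule: infinite_finite_induct) (auto simp: vector_matrix_left_distrib)

lemma span_rows_eq_range_vector_matrix_mult:
  fixes A :: "'a::field^'m^'t"
  shows "vec.span (rows A) = range (\<lambda>x. x v* A)"
proof -
  have "rows A = (\<lambda>x. x v* A) ` cart_basis"
    by (force simp: rows_def row_def cart_basis_def axis_vector_matrix_mult)
  then show ?thesis
    using vec.linear_span_image[OF matrix_vector_mul_linear_gen[of "transpose A"]]
    by simp
qed

lemma bit_vec_eq_sum_axis: "x = (\<Sum>t\<in>{t. x $ t = 1}. axis t (1::bit))"
proof -
  have "x = (\<Sum>t\<in>UNIV. x $ t *s axis t 1)"
    by (simp add: basis_expansion)
  also have "\<dots> = (\<Sum>t\<in>{t. x $ t = 1}. axis t 1)"
    by (rule sum.mono_neutral_cong_right) auto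
  finally show ?thesis .
qed

lemma bit_vec_eq_ones_add_sum_axis: "x = (\<chi> _. 1) + (\<Sum>t\<in>{t. x $ t = 0}. axis t (1::bit))"
proof -
  have "(\<chi> _. 1) + x = (\<Sum>t\<in>{t. ((\<chi> _. 1) + x) $ t = 1}. axis t (1::bit))"
    by (rule bit_vec_eq_sum_axis)
  also have "{t. ((\<chi> _. 1) + x) $ t = 1} = {t. x $ t = 0}"
    by auto
  finally have "(\<chi> _. 1) + x = (\<Sum>t\<in>{t. x $ t = 0}. axis t (1::bit))" .
  moreover have "y + y = 0" for y :: "bit^'t"
    by (simp add: vec_eq_iff)
  ultimately show ?thesis
    by (metis add.assoc add_0)
qed

lemma bit_vec_eq_sum_of_few_axes:
  fixes x :: "bit^'t"
  assumes "CARD('t) \<le> 2 * k"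
  obtains U where "card U \<le> k" "x = (\<Sum>t\<in>U. axis t 1)"
    | U where "card U < k" "x = (\<chi> _. 1) + (\<Sum>t\<in>U. axis t 1)"
proof -
  have "card {t. x $ t = 1} + card {t. x $ t = 0} = CARD('t)"
    by (subst card_Un_disjoint[symmetric]) (auto intro: arg_cong[where f = card])
  then have "card {t. x $ t = 1} \<le> k \<or> card {t. x $ t = 0} < k"
    using assms by linarith
  then show thesis
    using that bit_vec_eq_sum_axis bit_vec_eq_ones_add_sum_axis by blast
qed

lemma sum_reindex_on_preimage:
  assumes "bij_betw e I UNIV"
  shows "card (I \<inter> e -` U) = card U \<and> (\<Sum>j\<in>I \<inter> e -` U. f (e j)) = (\<Sum>u\<in>U. f u)"
proof -
  have "U \<subseteq> e ` (I \<inter> e -` U)"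
  proof
    fix u assume "u \<in> U"
    moreover have "u \<in> e ` I"
      using bij_betw_imp_surj_on[OF assms] by simp
    ultimately show "u \<in> e ` (I \<inter> e -` U)"
      by auto
  qed
  then have "bij_betw e (I \<inter> e -` U) U"
    by (intro bij_betw_subset[OF assms]) auto
  then show ?thesis
    by (simp add: bij_betw_same_card sum.reindex_bij_betw)
qed

lemma ex_bij_betw_lessThan_card: "\<exists>e :: nat \<Rightarrow> 'a::finite. bij_betw e {..<CARD('a)} UNIV"
  using ex_bij_betw_nat_finite[of "UNIV :: 'a set"] by (simp add: atLeast0LessThan)

lemma card_subsets_card_le:
  assumes "finite A"
  shows "card {S. S \<subseteq> A \<and> card S \<le> k} = (\<Sum>i\<le>k. card A choose i)"
proof -
  have "{S. S \<subseteq> A \<and> card S \<le> k} = (\<Union>i\<le>k. {S. S \<subseteq> A \<and> card S = i})"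
    by auto
  also have "card \<dots> = (\<Sum>i\<le>k. card {S. S \<subseteq> A \<and> card S = i})"
    using assms by (intro card_UN_disjoint) (auto intro: finite_subset[of _ "Pow A"])
  finally show ?thesis
    using assms by (simp add: n_subsets)
qed

lemma sum_binomial_le_exp_power:
  assumes "1 \<le> k" "k \<le> N"
  shows "real (\<Sum>i\<le>k. N choose i) \<le> (exp 1 * N / k) ^ k"
proof -
  define q where "q = real k / real N"
  have q: "0 < q" "q \<le> 1"
    using assms by (auto simp: q_def)
  have "real (\<Sum>i\<le>k. N choose i) * q ^ k = (\<Sum>i\<le>k. real (N choose i) * q ^ k)"
    by (simp add: sum_distrib_right)
  also have "\<dots> \<le> (\<Sum>i\<le>k. real (N choose i) * q ^ i)"
    using q by (intro sum_mono mult_left_mono power_decreasing) auto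
  also have "\<dots> \<le> (\<Sum>i\<le>N. real (N choose i) * q ^ i)"
    using assms q by (intro sum_mono2) auto
  also have "\<dots> = (q + 1) ^ N"
    by (simp add: binomial_ring)
  also have "\<dots> \<le> exp q ^ N"
    using q by (intro power_mono) (auto simp: add.commute)
  also have "\<dots> = exp 1 ^ k"
    using assms by (simp add: q_def flip: exp_of_nat_mult)
  finally show ?thesis
    using assms q by (simp add: q_def field_simps)
qed

lemma root_bound_from_power_bound:
  fixes n N :: real and k :: nat
  assumes "1 \<le> k" "0 < N" "0 \<le> n" "n \<le> (exp 1 * N / k) ^ k"
  shows "k / exp 1 * (n / k) powr (1 / k) \<le> N"
proof -
  define y where "y = exp 1 * N / k"
  have y: "0 < y"
    using assms by (simp add: y_def)
  have "(n / k) powr (1 / k) \<le> n powr (1 / k)"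
    using assms by (intro powr_mono2) (auto simp: divide_le_eq mult_le_cancel_left1)
  also have "\<dots> \<le> (y ^ k) powr (1 / k)"
    using assms by (intro powr_mono2) (auto simp: y_def)
  also have "\<dots> = y"
    using assms y by (simp add: powr_realpow[symmetric] powr_powr)
  finally have "k / exp 1 * (n / k) powr (1 / k) \<le> k / exp 1 * y"
    by (intro mult_left_mono) auto
  then show ?thesis
    using assms by (simp add: y_def)
qed

lemma card_le_card_supports:
  fixes w :: "nat \<Rightarrow> 'a::comm_monoid_add"
  assumes "0 \<notin> V" and "\<forall>v\<in>V. \<exists>S. S \<subseteq> {..<N} \<and> card S \<le> k \<and> v = (\<Sum>j\<in>S. w j)"
  shows "card V \<le> card {S. S \<subseteq> {..<N} \<and> S \<noteq> {} \<and> card S \<le> k}"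
proof -
  obtain supp where supp: "\<forall>v\<in>V. supp v \<subseteq> {..<N} \<and> card (supp v) \<le> k \<and> v = (\<Sum>j\<in>supp v. w j)"
    using assms(2) by metis
  then have "inj_on supp V"
    by (metis inj_onI)
  moreover have "supp ` V \<subseteq> {S. S \<subseteq> {..<N} \<and> S \<noteq> {} \<and> card S \<le> k}"
    using supp assms(1) by fastforce
  moreover have "finite {S. S \<subseteq> {..<N} \<and> S \<noteq> {} \<and> card S \<le> k}"
    by (rule finite_subset[of _ "Pow {..<N}"]) auto
  ultimately show ?thesis
    by (rule card_inj_on_le)
qed

lemma card_nonempty_subsets_le:
  assumes "N \<le> T" and "k < T"
  shows "card {S. S \<subseteq> {..<N} \<and> S \<noteq> {} \<and> card S \<le> k} \<le> 2 ^ T - 2"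
proof -
  have "card {S. S \<subseteq> {..<N} \<and> S \<noteq> {} \<and> card S \<le> k} \<le> card (Pow {..<T} - {{}, {..<T}})"
    using assms by (intro card_mono) auto
  also have "\<dots> = 2 ^ T - 2"
    using assms by (simp add: card_Diff_subset card_Pow)
      (metis card_2_iff lessThan_empty_iff not_less_zero)
  finally show ?thesis .
qed

lemma nat_ceiling_half_le_iff: "nat \<lceil>real T / 2\<rceil> \<le> k \<longleftrightarrow> T \<le> 2 * k"
  by (simp add: nat_le_iff ceiling_le_iff) linarith

lemma less_nat_ceiling_half_iff: "k < nat \<lceil>real T / 2\<rceil> \<longleftrightarrow> 2 * k < T"
  using nat_ceiling_half_le_iff[of T k] by linarith

definition has_sparse_factorization :: "nat \<Rightarrow> bit^'m^'n \<Rightarrow> bit^'m^'t \<Rightarrow> nat \<Rightarrow> bool" where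
  "has_sparse_factorization k G A N \<longleftrightarrow> (\<exists>P :: nat \<Rightarrow> bit^'t.
      \<forall>i. \<exists>S. S \<subseteq> {..<N} \<and> card S \<le> k \<and> G $ i = (\<Sum>j\<in>S. P j v* A))"

lemma Tmin_eq_Least: "Tmin k G A = (LEAST N. has_sparse_factorization k G A N)"
  by (simp add: Tmin_def has_sparse_factorization_def)

lemma has_sparse_factorization_card_rows:
  fixes G :: "bit^'m^'n" and A :: "bit^'m^'t"
  assumes "\<forall>i. G $ i \<in> range (\<lambda>x. x v* A)" and "1 \<le> k"
  shows "has_sparse_factorization k G A CARD('n)"
proof -
  have "\<exists>x. \<forall>i. G $ i = x i v* A"
    using assms(1) by (simp add: image_iff choice_iff)
  then obtain x where x: "\<forall>i. G $ i = x i v* A"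
    by blast
  obtain e :: "nat \<Rightarrow> 'n" where e: "bij_betw e {..<CARD('n)} UNIV"
    using ex_bij_betw_lessThan_card by blast
  define P where "P j = x (e j)" for j
  have "\<exists>S. S \<subseteq> {..<CARD('n)} \<and> card S \<le> k \<and> G $ i = (\<Sum>j\<in>S. P j v* A)" for i
  proof -
    let ?S = "{..<CARD('n)} \<inter> e -` {i}"
    have "card ?S = 1" and "(\<Sum>j\<in>?S. P j v* A) = G $ i"
      using sum_reindex_on_preimage[OF e, of "{i}" "\<lambda>i. x i v* A"] x by (simp_all add: P_def)
    then show ?thesis
      using assms(2) by (intro exI[of _ ?S]) simp
  qed
  then show ?thesis
    unfolding has_sparse_factorization_def by blast
qed

lemma has_sparse_factorization_Tmin:
  assumes "\<forall>i. G $ i \<in> range (\<lambda>x. x v* A)" and "1 \<le> k"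
  shows "has_sparse_factorization k G A (Tmin k G A)"
  unfolding Tmin_eq_Least
  using has_sparse_factorization_card_rows[OF assms] by (rule LeastI)

lemma card_le_if_has_sparse_factorization:
  fixes G :: "bit^'m^'n"
  assumes "has_sparse_factorization k G A N" and "inj (\<lambda>i. G $ i)" and "\<forall>i. G $ i \<noteq> 0"
  shows "CARD('n) \<le> card {S. S \<subseteq> {..<N} \<and> S \<noteq> {} \<and> card S \<le> k}"
proof -
  obtain P :: "nat \<Rightarrow> bit^_" where
    "\<forall>i. \<exists>S. S \<subseteq> {..<N} \<and> card S \<le> k \<and> G $ i = (\<Sum>j\<in>S. P j v* A)"
    using assms(1) unfolding has_sparse_factorization_def by blast
  then have "card (range (\<lambda>i. G $ i)) \<le> card {S. S \<subseteq> {..<N} \<and> S \<noteq> {} \<and> card S \<le> k}"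
    using assms(3) by (intro card_le_card_supports[where w = "\<lambda>j. P j v* A"]) auto
  then show ?thesis
    using assms(2) by (simp add: card_image)
qed

lemma has_sparse_factorization_Suc_card:
  fixes G :: "bit^'m^'n" and A :: "bit^'m^'t"
  assumes "\<forall>i. G $ i \<in> range (\<lambda>x. x v* A)" and "CARD('t) \<le> 2 * k"
  shows "has_sparse_factorization k G A (CARD('t) + 1)"
proof -
  let ?I = "{..<CARD('t)}"
  obtain e :: "nat \<Rightarrow> 't" where e: "bij_betw e ?I UNIV"
    using ex_bij_betw_lessThan_card by blast
  define P :: "nat \<Rightarrow> bit^'t" where "P j = (if j < CARD('t) then axis (e j) 1 else (\<chi> _. 1))" for j
  have axes: "card (?I \<inter> e -` U) = card U \<and> (\<Sum>j\<in>?I \<inter> e -` U. P j) = (\<Sum>t\<in>U. axis t 1)" for U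
    using sum_reindex_on_preimage[OF e, of U "\<lambda>t. axis t 1"] by (simp add: P_def)
  have few: "\<exists>S. S \<subseteq> {..<CARD('t) + 1} \<and> card S \<le> k \<and> x = (\<Sum>j\<in>S. P j)" for x
    using bit_vec_eq_sum_of_few_axes[OF assms(2), of x]
  proof cases
    case (1 U)
    then show ?thesis
      using axes[of U] by (intro exI[of _ "?I \<inter> e -` U"]) auto
  next
    case (2 U)
    then show ?thesis
      using axes[of U] by (intro exI[of _ "insert (CARD('t)) (?I \<inter> e -` U)"]) (auto simp: P_def)
  qed
  have "\<exists>S. S \<subseteq> {..<CARD('t) + 1} \<and> card S \<le> k \<and> G $ i = (\<Sum>j\<in>S. P j v* A)" for i
  proof -
    obtain x where "G $ i = x v* A"
      using assms(1) by blast
    moreover obtain S where "S \<subseteq> {..<CARD('t) + 1}" "card S \<le> k" "x = (\<Sum>j\<in>S. P j)"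
      using few by blast
    ultimately show ?thesis
      by (auto simp: vector_matrix_mult_sum)
  qed
  then show ?thesis
    unfolding has_sparse_factorization_def by blast
qed

context
  fixes G :: "bit^'m^'n" and A :: "bit^'m^'t"
  assumes G_in_row_space: "\<forall>i. G $ i \<in> range (\<lambda>x. x v* A)"
    and G_inj: "inj (\<lambda>i. G $ i)"
    and G_nonzero: "\<forall>i. G $ i \<noteq> 0"
    and card_n: "CARD('n) = 2 ^ CARD('t) - 1"
begin

lemma Tmin_gt_card:
  assumes "1 \<le> k" and "k < CARD('t)"
  shows "CARD('t) < Tmin k G A"
proof (rule ccontr)
  assume "\<not> CARD('t) < Tmin k G A"
  have "CARD('n) \<le> card {S. S \<subseteq> {..<Tmin k G A} \<and> S \<noteq> {} \<and> card S \<le> k}"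
    using has_sparse_factorization_Tmin[OF G_in_row_space assms(1)] G_inj G_nonzero
    by (rule card_le_if_has_sparse_factorization)
  also have "\<dots> \<le> 2 ^ CARD('t) - 2"
    using \<open>\<not> CARD('t) < Tmin k G A\<close> assms(2) by (intro card_nonempty_subsets_le) auto
  finally have "CARD('n) \<le> 2 ^ CARD('t) - 2" .
  moreover have "(2::nat) \<le> 2 ^ CARD('t)"
    using assms by (simp add: self_le_power)
  ultimately show False
    using card_n by linarith
qed

lemma Tmin_eq_Suc_card:
  assumes "CARD('t) \<le> 2 * k" and "k < CARD('t)"
  shows "Tmin k G A = CARD('t) + 1"
proof -
  have "Tmin k G A \<le> CARD('t) + 1"
    unfolding Tmin_eq_Least
    using has_sparse_factorization_Suc_card[OF G_in_row_space assms(1)] by (rule Least_le)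
  moreover have "1 \<le> k"
    using assms by linarith
  ultimately show ?thesis
    using Tmin_gt_card assms(2) by fastforce
qed

lemma Tmin_ge_root_bound:
  assumes "1 \<le> k" and "k < CARD('t)"
  shows "real k / exp 1 * ((2 ^ CARD('t) - 1) / real k) powr (1 / real k) \<le> Tmin k G A"
proof -
  define N where "N = Tmin k G A"
  have "k \<le> N"
    using Tmin_gt_card[OF assms] assms(2) unfolding N_def by linarith
  have "CARD('n) \<le> card {S. S \<subseteq> {..<N} \<and> S \<noteq> {} \<and> card S \<le> k}"
    using has_sparse_factorization_Tmin[OF G_in_row_space assms(1)] G_inj G_nonzero
    unfolding N_def by (rule card_le_if_has_sparse_factorization)
  also have "\<dots> \<le> card {S. S \<subseteq> {..<N} \<and> card S \<le> k}"
    by (intro card_mono) (auto intro: finite_subset[of _ "Pow {..<N}"])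
  also have "\<dots> = (\<Sum>i\<le>k. N choose i)"
    by (simp add: card_subsets_card_le)
  finally have "real CARD('n) \<le> real (\<Sum>i\<le>k. N choose i)"
    by (simp only: of_nat_le_iff)
  also have "\<dots> \<le> (exp 1 * N / k) ^ k"
    using assms(1) \<open>k \<le> N\<close> by (rule sum_binomial_le_exp_power)
  finally have "real k / exp 1 * (real CARD('n) / real k) powr (1 / real k) \<le> real N"
    using assms(1) \<open>k \<le> N\<close> by (intro root_bound_from_power_bound) auto
  moreover have "real CARD('n) = 2 ^ CARD('t) - 1"
    using card_n by (simp add: of_nat_diff)
  ultimately show ?thesis
    by (simp add: N_def)
qed

end

theorem lemma1:
  fixes G :: "bit^'m^'n" and A :: "bit^'m^'t"
  assumes T2: "CARD('t) \<ge> 2"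
    and n_def: "CARD('n) = 2 ^ CARD('t) - 1"
    and G_distinct: "inj (\<lambda>i. G $ i)"
    and G_nonzero: "\<forall>i. G $ i \<noteq> 0"
    and G_dim: "vec.dim (vec.span (rows G)) = CARD('t)"
    and A_inj: "inj (\<lambda>i. A $ i)"
    and A_indep: "vec.independent (rows A)"
    and A_span: "vec.span (rows A) = vec.span (rows G)"
  shows "(\<forall>k. 1 \<le> k \<and> k < CARD('t) \<longrightarrow> Tmin k G A \<ge> CARD('t) + 1)
       \<and> (\<forall>k. nat \<lceil>real CARD('t) / 2\<rceil> \<le> k \<and> k < CARD('t) \<longrightarrow> Tmin k G A = CARD('t) + 1)
       \<and> (\<forall>k. 1 \<le> k \<and> k < nat \<lceil>real CARD('t) / 2\<rceil> \<longrightarrow>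
            real (Tmin k G A) \<ge> real k / exp 1 * ((2 ^ CARD('t) - 1) / real k) powr (1 / real k))"
proof -
  have rep: "\<forall>i. G $ i \<in> range (\<lambda>x. x v* A)"
  proof
    fix i
    have "G $ i \<in> vec.span (rows A)"
      unfolding A_span by (rule vec.span_base) (auto simp: rows_def row_def)
    then show "G $ i \<in> range (\<lambda>x. x v* A)"
      by (simp only: span_rows_eq_range_vector_matrix_mult)
  qed
  note facts = rep G_distinct G_nonzero n_def
  show ?thesis
    using Tmin_gt_card[OF facts] Tmin_eq_Suc_card[OF facts] Tmin_ge_root_bound[OF facts]
    by (auto simp: nat_ceiling_half_le_iff less_nat_ceiling_half_iff Suc_le_eq)
qed

end
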